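(* Let $d\geq 1$ and let $x_1,\dots,x_m\in\mathbb{R}^d$ be distinct vectors such that $\|x_i+x_j\|_2=1$ for all $i\neq j$, where $\|\cdot\|_2$ is the Euclidean norm. Then $m\leq d+1$ if $d\neq 2$, and $m\leq 4$ if $d=2$. Both bounds are attained: for each $d$ there exist such configurations with $m=d+1$ (if $d\neq 2$) and $m=4$ (if $d=2$). *)

theory Defs
  imports "HOL-Analysis.Analysis"
begin

end

theory Submission
  imports Defs
begin

(* Upper bound, using only that more than d vectors are linearly dependent:
   (a) if all norm (x_i) > 1/2 and m > d + 1, an affine dependence
       sum mu_i x_i = 0, sum mu_i = 0 makes mu_j (4 norm(x_j)^2 - 1) constant,
       whence sum mu_j^2 (4 norm(x_j)^2 - 1) = 0 and mu = 0;
   (b) if norm (x_0) <= 1/2, the vectors x_i - x_0 have constant pairwise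
       inner product e = 2 norm(x_0)^2 - 1/2 <= 0, and a dependence among any
       d + 1 of them forces d + 1 = 3; for d = 2 it excludes a fifth point.
   Lower bound: four explicit points in a plane for d = 2, and the vectors
   b_i / sqrt 2 plus a multiple of b_1 + ... + b_d for an orthonormal basis. *)

lemma nontrivial_vanishing_combination:
  fixes y :: "'i \<Rightarrow> 'a::euclidean_space"
  assumes "finite T" "inj_on y T" "DIM('a) < card T"
  shows "\<exists>\<mu>. (\<exists>i\<in>T. \<mu> i \<noteq> 0) \<and> (\<Sum>i\<in>T. \<mu> i *\<^sub>R y i) = 0"
proof -
  have "dependent (y ` T)"
    by (rule dependent_biggerset) (use assms card_image[OF assms(2)] in simp)
  then obtain u where u: "\<exists>v\<in>y ` T. u v \<noteq> 0" "(\<Sum>v\<in>y ` T. u v *\<^sub>R v) = 0"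
    using dependent_finite[OF finite_imageI[OF assms(1)]] by blast
  have "(\<Sum>v\<in>y ` T. u v *\<^sub>R v) = (\<Sum>i\<in>T. u (y i) *\<^sub>R y i)"
    using sum.reindex[OF assms(2)] by simp
  then show ?thesis using u by (intro exI[of _ "\<lambda>i. u (y i)"]) auto
qed

lemma norm_add_eq_1_iff:
  fixes x y :: "'a::real_inner"
  shows "norm (x + y) = 1 \<longleftrightarrow> (norm x)\<^sup>2 + 2 * inner x y + (norm y)\<^sup>2 = 1"
  by (simp add: norm_eq_1 power2_norm_eq_inner inner_add_left inner_add_right
      inner_commute[of y x] add_ac)

(* For an affine dependence (sum mu_i x_i = 0, sum mu_i = 0) of a unit-sum
   family, pairing with x_j shows that mu_j (4 norm(x_j)^2 - 1) does not depend
   on j. *)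
lemma affine_dependence_row_identity:
  fixes x :: "'i \<Rightarrow> 'a::real_inner"
  assumes fin: "finite I"
    and pw: "\<And>i j. i \<in> I \<Longrightarrow> j \<in> I \<Longrightarrow> i \<noteq> j \<Longrightarrow> norm (x i + x j) = 1"
    and comb: "(\<Sum>i\<in>I. \<mu> i *\<^sub>R x i) = 0" and sum0: "sum \<mu> I = 0"
    and j: "j \<in> I"
  shows "\<mu> j * (4 * (norm (x j))\<^sup>2 - 1) = (\<Sum>i\<in>I. \<mu> i * (norm (x i))\<^sup>2)"
proof -
  define q where "q i = (norm (x i))\<^sup>2 + 2 * inner (x i) (x j) + (norm (x j))\<^sup>2 - 1" for i
  have q_other: "q i = (if i = j then 4 * (norm (x j))\<^sup>2 - 1 else 0)" if "i \<in> I" for i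
    using pw[OF that j] norm_add_eq_1_iff[of "x i" "x j"]
    by (auto simp: q_def power2_norm_eq_inner)
  have "(\<Sum>i\<in>I. \<mu> i * q i) = \<mu> j * (4 * (norm (x j))\<^sup>2 - 1)"
    using fin j by (simp add: q_other if_distrib sum.If_cases cong: sum.cong)
  moreover have "(\<Sum>i\<in>I. \<mu> i * q i)
      = (\<Sum>i\<in>I. \<mu> i * (norm (x i))\<^sup>2) + 2 * inner (\<Sum>i\<in>I. \<mu> i *\<^sub>R x i) (x j)
        + sum \<mu> I * ((norm (x j))\<^sup>2 - 1)"
  proof -
    have "(\<Sum>i\<in>I. \<mu> i * q i) = (\<Sum>i\<in>I. \<mu> i * (norm (x i))\<^sup>2
        + 2 * (\<mu> i * inner (x i) (x j)) + \<mu> i * ((norm (x j))\<^sup>2 - 1))"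
      by (rule sum.cong) (simp_all add: q_def algebra_simps)
    then show ?thesis
      by (simp only: sum.distrib sum_distrib_left[symmetric] sum_distrib_right[symmetric]
          inner_sum_left inner_scaleR_left)
  qed
  ultimately show ?thesis using comb sum0 by simp
qed

lemma bound_large_norms:
  fixes x :: "'i \<Rightarrow> 'a::euclidean_space"
  assumes fin: "finite I" and inj: "inj_on x I"
    and pw: "\<And>i j. i \<in> I \<Longrightarrow> j \<in> I \<Longrightarrow> i \<noteq> j \<Longrightarrow> norm (x i + x j) = 1"
    and big: "\<And>i. i \<in> I \<Longrightarrow> norm (x i) > 1/2"
  shows "card I \<le> DIM('a) + 1"
proof (rule ccontr)
  assume "\<not> card I \<le> DIM('a) + 1"
  then have many: "DIM('a \<times> real) < card I" by (simp add: DIM_prod)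
  have "inj_on (\<lambda>i. (x i, 1::real)) I" using inj by (auto simp: inj_on_def)
  then obtain \<mu> where nz: "\<exists>i\<in>I. \<mu> i \<noteq> 0"
      and comb: "(\<Sum>i\<in>I. \<mu> i *\<^sub>R (x i, 1::real)) = 0"
    using nontrivial_vanishing_combination[OF fin _ many] by blast
  have comb_x: "(\<Sum>i\<in>I. \<mu> i *\<^sub>R x i) = 0"
    using arg_cong[OF comb, of fst] by (simp add: fst_sum)
  have sum0: "sum \<mu> I = 0"
    using arg_cong[OF comb, of snd] by (simp add: snd_sum)
  define c where "c j = 4 * (norm (x j))\<^sup>2 - 1" for j
  define A where "A = (\<Sum>i\<in>I. \<mu> i * (norm (x i))\<^sup>2)"
  have c_pos: "c j > 0" if "j \<in> I" for j
  proof -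
    have "(1/2)\<^sup>2 < (norm (x j))\<^sup>2" using big[OF that] by (intro power_strict_mono) auto
    then show ?thesis by (simp add: c_def power_divide)
  qed
  have row: "\<mu> j * c j = A" if "j \<in> I" for j
    unfolding c_def A_def by (rule affine_dependence_row_identity[OF fin pw comb_x sum0 that])
  from nz obtain i0 where i0: "i0 \<in> I" "\<mu> i0 \<noteq> 0" by blast
  have "0 < (\<Sum>j\<in>I. \<mu> j * (\<mu> j * c j))"
  proof (rule sum_pos2[OF fin i0(1)])
    show "0 < \<mu> i0 * (\<mu> i0 * c i0)"
      using mult_pos_pos[OF _ c_pos[OF i0(1)], of "\<mu> i0 * \<mu> i0"] i0(2)
      by (metis mult.assoc not_real_square_gt_zero)
    show "0 \<le> \<mu> j * (\<mu> j * c j)" if "j \<in> I" for j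
      using c_pos[OF that] by (simp add: mult.assoc[symmetric])
  qed
  also have "(\<Sum>j\<in>I. \<mu> j * (\<mu> j * c j)) = sum \<mu> I * A"
    by (simp add: row sum_distrib_right)
  finally show False using sum0 by simp
qed

lemma equiangular_dependence:
  fixes z :: "'i \<Rightarrow> 'a::real_inner"
  assumes fin: "finite T"
    and gram: "\<And>i j. i \<in> T \<Longrightarrow> j \<in> T \<Longrightarrow> i \<noteq> j \<Longrightarrow> inner (z i) (z j) = e"
    and e_nonpos: "e \<le> 0" and nonzero: "\<And>i. i \<in> T \<Longrightarrow> z i \<noteq> 0"
    and comb: "(\<Sum>i\<in>T. \<mu> i *\<^sub>R z i) = 0" and nz: "\<exists>i\<in>T. \<mu> i \<noteq> 0"
  shows "e * sum \<mu> T \<noteq> 0"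
    and "(\<Sum>i\<in>T. \<mu> i * (norm (z i))\<^sup>2) = e * sum \<mu> T * (1 - real (card T))"
proof -
  define S where "S = sum \<mu> T"
  define g where "g j = (norm (z j))\<^sup>2 - e" for j
  have row: "\<mu> j * g j = - (e * S)" if j: "j \<in> T" for j
  proof -
    have "0 = inner (\<Sum>i\<in>T. \<mu> i *\<^sub>R z i) (z j)" using comb by simp
    also have "\<dots> = (\<Sum>i\<in>T. \<mu> i * e + (if i = j then \<mu> j * g j else 0))"
      unfolding inner_sum_left
      by (rule sum.cong) (auto simp: gram j g_def power2_norm_eq_inner algebra_simps)
    also have "\<dots> = e * S + \<mu> j * g j"
      using fin j by (simp add: sum.distrib S_def sum_distrib_left mult.commute)
    finally show ?thesis by simp
  qed
  have g_pos: "g j > 0" if "j \<in> T" for j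
  proof -
    have "(norm (z j))\<^sup>2 > 0" using nonzero[OF that] by simp
    then show ?thesis using e_nonpos unfolding g_def by linarith
  qed
  show "e * sum \<mu> T \<noteq> 0"
  proof
    assume "e * sum \<mu> T = 0"
    then have "\<mu> j * g j = 0" if "j \<in> T" for j
      using row[OF that] by (simp add: S_def)
    then have "\<mu> j = 0" if "j \<in> T" for j
      using g_pos[OF that] that by fastforce
    then show False using nz by blast
  qed
  have "(\<Sum>i\<in>T. \<mu> i * (norm (z i))\<^sup>2) = (\<Sum>i\<in>T. \<mu> i * g i) + e * S"
    by (simp add: g_def S_def algebra_simps sum_subtractf sum_distrib_left)
  also have "(\<Sum>i\<in>T. \<mu> i * g i) = (\<Sum>i\<in>T. - (e * S))"
    by (rule sum.cong) (simp_all add: row)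
  finally show "(\<Sum>i\<in>T. \<mu> i * (norm (z i))\<^sup>2) = e * sum \<mu> T * (1 - real (card T))"
    by (simp add: S_def algebra_simps)
qed

lemma translated_unit_sum_family:
  fixes x :: "'i \<Rightarrow> 'a::real_inner"
  assumes pw: "\<And>i j. i \<in> I \<Longrightarrow> j \<in> I \<Longrightarrow> i \<noteq> j \<Longrightarrow> norm (x i + x j) = 1"
    and i0: "i0 \<in> I" and i: "i \<in> I - {i0}"
  shows "\<And>j. j \<in> I - {i0} \<Longrightarrow> i \<noteq> j \<Longrightarrow>
           inner (x i - x i0) (x j - x i0) = 2 * (norm (x i0))\<^sup>2 - 1/2"
    and "(norm (x i - x i0))\<^sup>2 = 1 - 4 * (norm (x i0))\<^sup>2 - 4 * inner (x i - x i0) (x i0)"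
proof -
  have expand: "(norm (x k))\<^sup>2 + 2 * inner (x k) (x l) + (norm (x l))\<^sup>2 = 1"
    if "k \<in> I" "l \<in> I" "k \<noteq> l" for k l
    using pw[OF that] norm_add_eq_1_iff by blast
  have with_i0: "(norm (x k))\<^sup>2 + 2 * inner (x k) (x i0) + (norm (x i0))\<^sup>2 = 1"
    if "k \<in> I - {i0}" for k
    using expand[of k i0] that i0 by blast
  show "inner (x i - x i0) (x j - x i0) = 2 * (norm (x i0))\<^sup>2 - 1/2"
    if j: "j \<in> I - {i0}" and "i \<noteq> j" for j
  proof -
    have "inner (x i - x i0) (x j - x i0)
        = inner (x i) (x j) - inner (x i) (x i0) - inner (x j) (x i0) + (norm (x i0))\<^sup>2"
      by (simp add: power2_norm_eq_inner inner_diff_left inner_diff_right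
          inner_commute[of "x i0" "x j"])
    then show ?thesis
      using expand[of i j] with_i0[OF i] with_i0[OF j] i j \<open>i \<noteq> j\<close> by auto
  qed
  have "(norm (x i - x i0))\<^sup>2 = (norm (x i))\<^sup>2 - 2 * inner (x i) (x i0) + (norm (x i0))\<^sup>2"
    by (simp add: power2_norm_eq_inner inner_diff_left inner_diff_right
        inner_commute[of "x i0" "x i"])
  moreover have "inner (x i - x i0) (x i0) = inner (x i) (x i0) - (norm (x i0))\<^sup>2"
    by (simp add: power2_norm_eq_inner inner_diff_left)
  ultimately show "(norm (x i - x i0))\<^sup>2
      = 1 - 4 * (norm (x i0))\<^sup>2 - 4 * inner (x i - x i0) (x i0)"
    using with_i0[OF i] by linarith
qed

(* Regime (b): if some x_i0 has norm at most 1/2, then every set T of more than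
   DIM other indices has exactly three elements: the translates x_i - x_i0 are
   equiangular with e = 2 norm(x_i0)^2 - 1/2 <= 0, and evaluating
   sum mu_i norm(x_i - x_i0)^2 for a dependence in two ways gives
   e * sum mu * (1 - card T) = - 2 * e * sum mu. *)
lemma bound_small_norm:
  fixes x :: "'i \<Rightarrow> 'a::euclidean_space"
  assumes inj: "inj_on x I"
    and pw: "\<And>i j. i \<in> I \<Longrightarrow> j \<in> I \<Longrightarrow> i \<noteq> j \<Longrightarrow> norm (x i + x j) = 1"
    and i0: "i0 \<in> I" and small: "norm (x i0) \<le> 1/2"
    and T: "T \<subseteq> I - {i0}" and many: "DIM('a) < card T"
  shows "card T = 3"
proof -
  have fin: "finite T" using many card.infinite by fastforce
  define w where "w = x i0"
  define e where "e = 2 * (norm w)\<^sup>2 - 1/2"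
  define z where "z i = x i - w" for i
  have gram: "inner (z i) (z j) = e" if "i \<in> T" "j \<in> T" "i \<noteq> j" for i j
    unfolding z_def e_def w_def
    by (rule translated_unit_sum_family(1)[OF pw]) (use i0 that T in auto)
  have norm_z: "(norm (z i))\<^sup>2 = - 2 * e - 4 * inner (z i) w" if "i \<in> T" for i
  proof -
    have "(norm (z i))\<^sup>2 = 1 - 4 * (norm w)\<^sup>2 - 4 * inner (z i) w"
      unfolding z_def w_def
      by (rule translated_unit_sum_family(2)[OF pw]) (use i0 that T in auto)
    then show ?thesis by (simp add: e_def)
  qed
  have e_nonpos: "e \<le> 0"
  proof -
    have "(norm w)\<^sup>2 \<le> (1/2)\<^sup>2" unfolding w_def using small by (intro power_mono) auto
    then show ?thesis by (simp add: e_def power_divide)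
  qed
  have nonzero: "z i \<noteq> 0" if "i \<in> T" for i
    using inj that T i0 unfolding z_def w_def inj_on_def by auto
  have "inj_on z T"
    using inj T unfolding inj_on_def z_def by auto
  then obtain \<mu> where nz: "\<exists>i\<in>T. \<mu> i \<noteq> 0" and comb: "(\<Sum>i\<in>T. \<mu> i *\<^sub>R z i) = 0"
    using nontrivial_vanishing_combination[OF fin _ many] by blast
  note equi = equiangular_dependence[OF fin gram e_nonpos nonzero comb nz]
  have "(\<Sum>i\<in>T. \<mu> i * (norm (z i))\<^sup>2)
      = (\<Sum>i\<in>T. (- 2 * e) * \<mu> i - 4 * (\<mu> i * inner (z i) w))"
    by (rule sum.cong) (simp_all add: norm_z algebra_simps)
  also have "\<dots> = - 2 * e * sum \<mu> T - 4 * inner (\<Sum>i\<in>T. \<mu> i *\<^sub>R z i) w"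
    by (simp only: sum_subtractf sum_distrib_left[symmetric] inner_sum_left inner_scaleR_left)
  finally have "(\<Sum>i\<in>T. \<mu> i * (norm (z i))\<^sup>2) = e * sum \<mu> T * (- 2)"
    using comb by simp
  with equi(2) have "e * sum \<mu> T * (1 - real (card T)) = e * sum \<mu> T * (- 2)"
    by simp
  then have "1 - real (card T) = - 2" using equi(1) mult_left_cancel by blast
  then show ?thesis by linarith
qed

(* The upper bound: combine the two regimes, choosing T of the size of the
   claimed bound, which exceeds DIM and differs from 3. *)
lemma unit_sum_family_card_le:
  fixes x :: "'i \<Rightarrow> 'a::euclidean_space"
  assumes fin: "finite I" and inj: "inj_on x I"
    and pw: "\<And>i j. i \<in> I \<Longrightarrow> j \<in> I \<Longrightarrow> i \<noteq> j \<Longrightarrow> norm (x i + x j) = 1"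
  shows "card I \<le> (if DIM('a) = 2 then 4 else DIM('a) + 1)"
proof (cases "\<forall>i\<in>I. norm (x i) > 1/2")
  case True
  then show ?thesis using bound_large_norms[OF fin inj pw] by auto
next
  case False
  then obtain i0 where i0: "i0 \<in> I" "norm (x i0) \<le> 1/2" by (auto simp: not_less)
  let ?b = "if DIM('a) = 2 then 4 else DIM('a) + 1"
  show ?thesis
  proof (rule ccontr)
    assume "\<not> card I \<le> ?b"
    then have "?b \<le> card (I - {i0})" using fin i0(1) by simp
    then obtain T where T: "T \<subseteq> I - {i0}" "card T = ?b"
      by (rule obtain_subset_with_card_n)
    have "card T = 3"
      by (rule bound_small_norm[OF inj pw i0 T(1)]) (use T(2) in auto)
    then show False using T(2) by (simp split: if_splits)
  qed
qed

lemma four_point_configuration: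
  fixes u v :: "'a::real_inner"
  assumes u: "norm u = 1" and v: "norm v = 1" and uv: "inner u v = 0"
  shows "\<exists>x :: nat \<Rightarrow> 'a. inj_on x {..<4} \<and> (\<forall>i<4. \<forall>j<4. i \<noteq> j \<longrightarrow> norm (x i + x j) = 1)"
proof -
  define s :: real where "s = sqrt 3 / 2"
  have s: "s > 0" "s\<^sup>2 = 3/4" by (simp_all add: s_def power_divide)
  define P :: "nat \<Rightarrow> real" where "P i = [0, 1, -1/2, -1/2] ! i" for i
  define Q :: "nat \<Rightarrow> real" where "Q i = [0, 0, s, -s] ! i" for i
  define x where "x i = P i *\<^sub>R u + Q i *\<^sub>R v" for i
  have uu: "inner u u = 1" and vv: "inner v v = 1"
    using u v by (simp_all add: norm_eq_1)
  have coord: "inner (x i) u = P i" "inner (x i) v = Q i" for i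
    by (simp_all add: x_def inner_add_left uu vv uv inner_commute[of v u])
  have norm_pq: "norm (p *\<^sub>R u + q *\<^sub>R v) = 1 \<longleftrightarrow> p\<^sup>2 + q\<^sup>2 = 1" for p q
    by (simp add: norm_eq_1 inner_add_left inner_add_right uu vv uv inner_commute[of v u]
        power2_eq_square)
  have four: "{..<4::nat} = {0, 1, 2, 3}" by auto
  have "inj_on x {..<4}"
  proof (rule inj_onI)
    fix i j assume "i \<in> {..<4}" "j \<in> {..<4}" "x i = x j"
    then have "P i = P j" "Q i = Q j" "i \<in> {0, 1, 2, 3}" "j \<in> {0, 1, 2, 3}"
      using coord[of i] coord[of j] four by auto
    then show "i = j" using s(1) by (auto simp: P_def Q_def)
  qed
  moreover have "norm (x i + x j) = 1" if "i < 4" "j < 4" "i \<noteq> j" for i j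
  proof -
    have "x i + x j = (P i + P j) *\<^sub>R u + (Q i + Q j) *\<^sub>R v"
      by (simp add: x_def algebra_simps)
    moreover have "i \<in> {0, 1, 2, 3}" "j \<in> {0, 1, 2, 3}" using that by auto
    then have "(P i + P j)\<^sup>2 + (Q i + Q j)\<^sup>2 = 1"
      using that(3) s(2) by (auto simp: P_def Q_def power2_eq_square algebra_simps)
    ultimately show ?thesis by (simp add: norm_pq)
  qed
  ultimately show ?thesis by blast
qed

(* Scalars for the general construction: alpha^2 = 1/2 makes
   norm (alpha b_i + alpha b_j) = 1, and the second equation makes
   norm (alpha b_i + gamma (b_1 + ... + b_d)) = 1. *)
lemma simplex_scalars:
  assumes "d \<ge> (1::nat)"
  shows "\<exists>\<alpha> \<gamma> :: real. \<alpha>\<^sup>2 = 1/2 \<and> \<alpha>\<^sup>2 + 2 * \<alpha> * \<gamma> + real d * \<gamma>\<^sup>2 = 1 \<and> \<gamma> \<noteq> \<alpha>"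
proof -
  define \<alpha> :: real where "\<alpha> = sqrt 2 / 2"
  define r :: real where "r = sqrt (real d + 1)"
  define \<gamma> where "\<gamma> = \<alpha> * (r - 1) / real d"
  have d: "real d > 0" using assms by simp
  have \<alpha>: "\<alpha>\<^sup>2 = 1/2" "\<alpha> > 0" by (simp_all add: \<alpha>_def power_divide)
  have r: "r\<^sup>2 = real d + 1" by (simp add: r_def)
  have "\<alpha>\<^sup>2 + 2 * \<alpha> * \<gamma> + real d * \<gamma>\<^sup>2 = \<alpha>\<^sup>2 * (real d + r\<^sup>2 - 1) / real d"
    using d by (simp add: \<gamma>_def field_simps power2_eq_square)
  also have "\<dots> = 1" using d by (simp add: r \<alpha>)
  finally have sum: "\<alpha>\<^sup>2 + 2 * \<alpha> * \<gamma> + real d * \<gamma>\<^sup>2 = 1" .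
  have "r < real d + 1"
    unfolding r_def using d
    by (intro real_sqrt_less_mono[of _ "(real d + 1)\<^sup>2", simplified])
      (simp add: power2_eq_square)
  then have "\<alpha> * (r - 1) < \<alpha> * real d" using \<alpha>(2) by simp
  then have "\<gamma> < \<alpha>" using d by (simp add: \<gamma>_def field_simps)
  then show ?thesis using \<alpha>(1) sum by (intro exI[of _ \<alpha>] exI[of _ \<gamma>]) auto
qed

lemma orthonormal_configuration:
  fixes b :: "nat \<Rightarrow> 'a::real_inner"
  assumes d: "d \<ge> 1"
    and ortho: "\<And>i j. i < d \<Longrightarrow> j < d \<Longrightarrow> inner (b i) (b j) = (if i = j then 1 else 0)"
  shows "\<exists>x :: nat \<Rightarrow> 'a. inj_on x {..<d + 1} \<and>
           (\<forall>i<d + 1. \<forall>j<d + 1. i \<noteq> j \<longrightarrow> norm (x i + x j) = 1)"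
proof -
  obtain \<alpha> \<gamma> :: real where \<alpha>: "\<alpha>\<^sup>2 = 1/2" and \<alpha>\<gamma>: "\<alpha>\<^sup>2 + 2 * \<alpha> * \<gamma> + real d * \<gamma>\<^sup>2 = 1"
      and ne: "\<gamma> \<noteq> \<alpha>"
    using simplex_scalars[OF d] by blast
  define c where "c = (\<Sum>k<d. b k)"
  have bc: "inner (b i) c = 1" if "i < d" for i
    using that by (simp add: c_def inner_sum_right ortho)
  have cc: "inner c c = real d"
    by (subst (1) c_def) (simp add: inner_sum_left bc)
  define x where "x i = (if i < d then \<alpha> *\<^sub>R b i else \<gamma> *\<^sub>R c)" for i
  have coord: "inner (x i) (b k) = (if i < d then if i = k then \<alpha> else 0 else \<gamma>)"
    if "k < d" for i k
    using that by (simp add: x_def ortho bc inner_commute[of c])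
  have "\<alpha> \<noteq> 0" using \<alpha> by auto
  then have separates: "inner (x j) (b i) \<noteq> inner (x i) (b i)" if "i < d" "j \<noteq> i" for i j
    using coord[OF that(1), of i] coord[OF that(1), of j] that ne by auto
  have "inj_on x {..<d + 1}"
  proof (rule inj_onI, rule ccontr)
    fix i j assume "i \<in> {..<d + 1}" "j \<in> {..<d + 1}" "x i = x j" "i \<noteq> j"
    then show False using separates[of i j] separates[of j i] by fastforce
  qed
  moreover have "norm (x i + x j) = 1" if "i < d + 1" "j < d + 1" "i \<noteq> j" for i j
  proof (cases "i < d \<and> j < d")
    case True
    then have "x i + x j = \<alpha> *\<^sub>R b i + \<alpha> *\<^sub>R b j" by (simp add: x_def)
    then show ?thesis
      using True that(3) \<alpha>
      by (simp add: norm_eq_1 inner_add_left inner_add_right ortho power2_eq_square)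
  next
    case False
    then have "(i = d \<and> j < d) \<or> (j = d \<and> i < d)" using that by auto
    then obtain k where k: "k < d" "x i + x j = \<alpha> *\<^sub>R b k + \<gamma> *\<^sub>R c"
      by (auto simp: x_def add.commute)
    have "inner (\<alpha> *\<^sub>R b k + \<gamma> *\<^sub>R c) (\<alpha> *\<^sub>R b k + \<gamma> *\<^sub>R c)
        = \<alpha>\<^sup>2 + 2 * \<alpha> * \<gamma> + real d * \<gamma>\<^sup>2"
      using k(1) by (simp add: inner_add_left inner_add_right ortho bc cc
          inner_commute[of c "b k"] power2_eq_square algebra_simps)
    then show ?thesis using \<alpha>\<gamma> k(2) by (simp add: norm_eq_1)
  qed
  ultimately show ?thesis by blast
qed

lemma unit_sum_family_exists:
  "\<exists>x :: nat \<Rightarrow> 'a::euclidean_space.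
     inj_on x {..<(if DIM('a) = 2 then 4 else DIM('a) + 1)} \<and>
     (\<forall>i<(if DIM('a) = 2 then 4 else DIM('a) + 1).
        \<forall>j<(if DIM('a) = 2 then 4 else DIM('a) + 1). i \<noteq> j \<longrightarrow> norm (x i + x j) = 1)"
proof (cases "DIM('a) = 2")
  case True
  then obtain u v :: 'a where uv: "Basis = {u, v}" "u \<noteq> v" by (auto simp: card_2_iff)
  then have "u \<in> Basis" "v \<in> Basis" by auto
  then have "norm u = 1" "norm v = 1" "inner u v = 0"
    using uv(2) by (simp_all add: inner_not_same_Basis)
  then show ?thesis using four_point_configuration True by simp
next
  case False
  obtain b where b: "bij_betw b {..<DIM('a)} (Basis :: 'a set)"
    using ex_bij_betw_nat_finite[of "Basis :: 'a set"] by (auto simp: lessThan_atLeast0)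
  have "inner (b i) (b j) = (if i = j then 1 else 0)" if "i < DIM('a)" "j < DIM('a)" for i j
  proof -
    have "b i \<in> Basis" "b j \<in> Basis" using b that by (auto dest: bij_betwE)
    moreover have "b i = b j \<longleftrightarrow> i = j" using b that by (auto simp: bij_betw_def inj_on_def)
    ultimately show ?thesis by (simp add: inner_Basis)
  qed
  then show ?thesis using orthonormal_configuration[of "DIM('a)" b] False by simp
qed

theorem theorem8:
  shows "(\<forall>(m::nat) (x::nat \<Rightarrow> real ^ 'n).
            inj_on x {..<m} \<and>
            (\<forall>i<m. \<forall>j<m. i \<noteq> j \<longrightarrow> norm (x i + x j) = 1)
            \<longrightarrow> m \<le> (if CARD('n) = 2 then 4 else CARD('n) + 1))
       \<and> (\<exists>x::nat \<Rightarrow> real ^ 'n.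
            inj_on x {..<(if CARD('n) = 2 then 4 else CARD('n) + 1)} \<and>
            (\<forall>i<(if CARD('n) = 2 then 4 else CARD('n) + 1).
               \<forall>j<(if CARD('n) = 2 then 4 else CARD('n) + 1).
                 i \<noteq> j \<longrightarrow> norm (x i + x j) = 1))"
proof -
  have dim: "DIM(real ^ 'n) = CARD('n)" by simp
  note upper = unit_sum_family_card_le[where 'a = "real ^ 'n", unfolded dim]
  note attained = unit_sum_family_exists[where 'a = "real ^ 'n", unfolded dim]
  show ?thesis
  proof (intro conjI allI impI attained)
    fix m :: nat and x :: "nat \<Rightarrow> real ^ 'n"
    assume "inj_on x {..<m} \<and> (\<forall>i<m. \<forall>j<m. i \<noteq> j \<longrightarrow> norm (x i + x j) = 1)"
    then show "m \<le> (if CARD('n) = 2 then 4 else CARD('n) + 1)"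
      using upper[of "{..<m}" x] by simp
  qed
qed

end
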